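(* Let $\beta>0$ and $N\in\mathbb{N}$. Define $W:[0,\infty)\to\mathbb{R}$ by $W(y)=\log(4y^2+1)-y\arctan(2y)$ and, for real $t$, $$P_{N,\beta}(t)=\prod_{j=1}^{N-1}\prod_{k=1}^{\lfloor j\beta/2\rfloor}\frac{\big(1+it+\frac{j\beta}{2}-k\big)\big(1+\frac{j\beta}{2}-k\big)}{\big(1+\frac{it}{2}+\frac{j\beta}{2}-k\big)^2},$$ where an empty product equals $1$. Let $c_3=\frac{\beta/8-1}{2N}+\frac38\beta+\frac32$. Then for $|t|\geq(N-1)\beta/2$, $$|P_{N,\beta}(t)|^2\leq\exp\Big(-\frac{1}{2\beta}t^2\,W\Big(\frac{N\beta}{2|t|}\Big)\Big)\exp(2c_3N).$$
   Context: $\lfloor x\rfloor$ denotes the integer part of $x$. *)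

theory Defs
  imports "HOL-Analysis.Analysis"
begin

definition W :: "real \<Rightarrow> real" where
  "W y = ln (4 * y^2 + 1) - y * arctan (2 * y)"

definition P :: "nat \<Rightarrow> real \<Rightarrow> real \<Rightarrow> complex" where
  "P N \<beta> t = (\<Prod>j\<in>{1..<N}. \<Prod>k\<in>{1..nat \<lfloor>real j * \<beta> / 2\<rfloor>}.
      ((1 + \<i> * of_real t + of_real (real j * \<beta> / 2 - real k))
        * of_real (1 + real j * \<beta> / 2 - real k))
      / (1 + \<i> * of_real t / 2 + of_real (real j * \<beta> / 2 - real k))^2)"

definition c3 :: "nat \<Rightarrow> real \<Rightarrow> real" where
  "c3 N \<beta> = (\<beta> / 8 - 1) / (2 * real N) + 3/8 * \<beta> + 3/2"

end

theory Submission
  imports Defs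
begin

text \<open>
  With \<open>T = \<bar>t\<bar>\<close>, the \<open>(j,k)\<close> factor of \<open>P\<close> has squared modulus \<open>1 + \<phi>(u)\<close>, where
  \<open>u = 1 + j\<beta>/2 - k \<ge> 1\<close> and \<open>\<phi>(u) = T\<^sup>2(8u\<^sup>2 - T\<^sup>2)/(T\<^sup>2 + 4u\<^sup>2)\<^sup>2\<close>;
  hence \<open>|P|\<^sup>2 \<le> exp (\<Sum>\<^sub>j \<Sum>\<^sub>k \<phi>(u))\<close>. The function \<open>\<phi>\<close> takes values in \<open>[-1, 1/3]\<close>
  and is unimodal on \<open>[0, \<infinity>)\<close> with peak at \<open>T/\<surd>2\<close>, so the inner sum over the
  unit-spaced points \<open>u\<close> is at most the integral \<open>\<Phi>(j\<beta>/2)\<close> of \<open>\<phi>\<close> plus a constant.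
  Finally \<open>\<Phi>(s\<beta>/2)\<close> is the derivative in \<open>s\<close> of \<open>-T\<^sup>2/(2\<beta>) W(s\<beta>/(2T))\<close> and \<open>\<Phi>' \<ge> -1\<close>,
  so the outer sum is at most that function at \<open>s = N\<close>, up to \<open>O(N)\<close>.
\<close>

lemma DERIV_ge_imp_increment_ge:
  fixes f f' :: "real \<Rightarrow> real"
  assumes "a \<le> b"
    and "\<And>x. a \<le> x \<Longrightarrow> x \<le> b \<Longrightarrow> (f has_real_derivative f' x) (at x)"
    and "\<And>x. a \<le> x \<Longrightarrow> x \<le> b \<Longrightarrow> m \<le> f' x"
  shows "m * (b - a) \<le> f b - f a"
proof -
  have "f a - m * a \<le> f b - m * b"
    using DERIV_nonneg_imp_nondecreasing[OF \<open>a \<le> b\<close>, of "\<lambda>x. f x - m * x"] assms(2,3)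
    by (fastforce intro!: derivative_eq_intros)
  then show ?thesis by (simp add: algebra_simps)
qed

lemma unimodal_quotient_diff:
  fixes S p q :: real
  assumes "S + p \<noteq> 0" "S + q \<noteq> 0"
  shows "S * (2 * q - S) / (S + q)^2 - S * (2 * p - S) / (S + p)^2
    = S * (q - p) * (4 * S^2 - 2 * p * q + S * (p + q)) / ((S + p)^2 * (S + q)^2)"
  using assms by (simp add: divide_simps) (simp add: algebra_simps power2_eq_square)

lemma unimodal_quotient_mono:
  fixes S p q :: real
  assumes "S > 0" "0 \<le> p" "p \<le> q" "q \<le> 2 * S"
  shows "S * (2 * p - S) / (S + p)^2 \<le> S * (2 * q - S) / (S + q)^2"
proof -
  have "0 \<le> p * (2 * S - q) + q * (2 * S - p) + S * (4 * S - p - q)"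
    using assms by simp
  then have "0 \<le> 4 * S^2 - 2 * p * q + S * (p + q)"
    by (simp add: power2_eq_square algebra_simps)
  with assms have "0 \<le> S * (q - p) * (4 * S^2 - 2 * p * q + S * (p + q)) / ((S + p)^2 * (S + q)^2)"
    by simp
  moreover have "S + p \<noteq> 0" "S + q \<noteq> 0" using assms by auto
  ultimately show ?thesis using unimodal_quotient_diff[of S p q] by simp
qed

lemma unimodal_quotient_antimono:
  fixes S p q :: real
  assumes "S > 0" "2 * S \<le> p" "p \<le> q"
  shows "S * (2 * q - S) / (S + q)^2 \<le> S * (2 * p - S) / (S + p)^2"
proof -
  have "0 \<le> (p - 2 * S) * (q - 2 * S)" "0 \<le> S * (q - p)" "0 \<le> (p - 2 * S) * S"
    using assms by simp_all
  then have "4 * S^2 - 2 * p * q + S * (p + q) \<le> 0"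
    by (simp add: power2_eq_square algebra_simps)
  with assms have "S * (q - p) * (4 * S^2 - 2 * p * q + S * (p + q)) \<le> 0"
    by (simp add: mult_nonneg_nonpos)
  then have "S * (q - p) * (4 * S^2 - 2 * p * q + S * (p + q)) / ((S + p)^2 * (S + q)^2) \<le> 0"
    by (simp add: divide_nonpos_nonneg)
  moreover have "S + p \<noteq> 0" "S + q \<noteq> 0" using assms by auto
  ultimately show ?thesis using unimodal_quotient_diff[of S p q] by simp
qed

definition phi :: "real \<Rightarrow> real \<Rightarrow> real" where
  "phi T u = T^2 * (8 * u^2 - T^2) / (T^2 + 4 * u^2)^2"

lemma norm_factor_squared:
  fixes t u :: real
  assumes "u > 0"
  shows "(cmod ((of_real u + \<i> * of_real t) * of_real u / (of_real u + \<i> * of_real t / 2)^2))^2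
    = 1 + phi \<bar>t\<bar> u"
proof -
  have "t^2 + 4 * u^2 > 0" using assms by (simp add: add_nonneg_pos)
  then show ?thesis
    by (simp add: norm_mult norm_divide norm_power cmod_power2 phi_def divide_simps)
      (simp add: algebra_simps power2_eq_square)
qed

lemma norm_P_squared:
  "(cmod (P N \<beta> t))^2
    = (\<Prod>j\<in>{1..<N}. \<Prod>k\<in>{1..nat \<lfloor>real j * \<beta> / 2\<rfloor>}. 1 + phi \<bar>t\<bar> (1 + real j * \<beta> / 2 - real k))"
proof -
  have "(cmod ((1 + \<i> * of_real t + of_real (real j * \<beta> / 2 - real k))
        * of_real (1 + real j * \<beta> / 2 - real k)
      / (1 + \<i> * of_real t / 2 + of_real (real j * \<beta> / 2 - real k))^2))^2
    = 1 + phi \<bar>t\<bar> (1 + real j * \<beta> / 2 - real k)"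
    if "k \<in> {1..nat \<lfloor>real j * \<beta> / 2\<rfloor>}" for j k
  proof -
    from that have "int k \<le> \<lfloor>real j * \<beta> / 2\<rfloor>" by auto
    then have "real k \<le> real j * \<beta> / 2" by (simp add: le_floor_iff)
    then show ?thesis
      using norm_factor_squared[of "1 + real j * \<beta> / 2 - real k" t] by (simp add: algebra_simps)
  qed
  then show ?thesis
    by (simp add: P_def prod_norm[symmetric] prod_power_distrib)
qed

lemma phi_ge_minus_one: "-1 \<le> phi T u"
proof (cases "T^2 + 4 * u^2 = 0")
  case False
  then have "T^2 + 4 * u^2 > 0" by (simp add: order_less_le)
  moreover have "-((T^2 + 4 * u^2)^2) \<le> T^2 * (8 * u^2 - T^2)"
    using zero_le_power2[of "4 * u^2"] zero_le_power2[of "4 * T * u"]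
    by (simp add: power2_eq_square algebra_simps)
  ultimately show ?thesis unfolding phi_def by (simp add: field_simps)
qed (simp add: phi_def)

lemma phi_le_one_third: "phi T u \<le> 1/3"
proof (cases "T^2 + 4 * u^2 = 0")
  case False
  then have "T^2 + 4 * u^2 > 0" by (simp add: order_less_le)
  moreover have "3 * (T^2 * (8 * u^2 - T^2)) \<le> (T^2 + 4 * u^2)^2"
    using zero_le_power2[of "T^2 - 2 * u^2"] by (simp add: power2_eq_square algebra_simps)
  ultimately show ?thesis unfolding phi_def by (simp add: field_simps)
qed (simp add: phi_def)

lemma phi_eq_unimodal_quotient: "phi T u = T^2 * (2 * (4 * u^2) - T^2) / (T^2 + 4 * u^2)^2"
  unfolding phi_def by simp

lemma phi_mono:
  assumes "T > 0" "0 \<le> v" "v \<le> w" "w \<le> T / sqrt 2"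
  shows "phi T v \<le> phi T w"
proof -
  have "w^2 \<le> (T / sqrt 2)^2" using assms by (intro power_mono) auto
  then have "4 * w^2 \<le> 2 * T^2" by (simp add: power_divide)
  with assms show ?thesis
    unfolding phi_eq_unimodal_quotient by (intro unimodal_quotient_mono) (auto intro: power_mono)
qed

lemma phi_antimono:
  assumes "T > 0" "T / sqrt 2 \<le> v" "v \<le> w"
  shows "phi T w \<le> phi T v"
proof -
  have "(T / sqrt 2)^2 \<le> v^2" using assms by (intro power_mono) auto
  then have "2 * T^2 \<le> 4 * v^2" by (simp add: power_divide)
  moreover have "0 \<le> T / sqrt 2" using assms by simp
  with assms have "0 \<le> v" by linarith
  ultimately show ?thesis
    using assms unfolding phi_eq_unimodal_quotient
    by (intro unimodal_quotient_antimono) (auto intro: power_mono)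
qed

lemma phi_ge_min_endpoints:
  assumes "T > 0" "0 \<le> x" "x \<le> s" "s \<le> y"
  shows "min (phi T x) (phi T y) \<le> phi T s"
proof (cases "s \<le> T / sqrt 2")
  case True
  then have "phi T x \<le> phi T s" using assms by (intro phi_mono) auto
  then show ?thesis by simp
next
  case False
  then have "phi T y \<le> phi T s" using assms by (intro phi_antimono) auto
  then show ?thesis by simp
qed

definition Phi :: "real \<Rightarrow> real \<Rightarrow> real" where
  "Phi T u = -(3/2) * u * T^2 / (T^2 + 4 * u^2) + T / 4 * arctan (2 * u / T)"

lemma Phi_zero [simp]: "Phi T 0 = 0"
  unfolding Phi_def by simp

lemma has_real_derivative_Phi:
  assumes "T > 0"
  shows "(Phi T has_real_derivative phi T u) (at u)"
proof -
  have pos: "T^2 + 4 * u^2 > 0" using assms by (simp add: add_pos_nonneg)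
  have "1 + (2 * u / T)^2 = (T^2 + 4 * u^2) / T^2"
    using assms by (simp add: field_simps power2_eq_square)
  with assms pos show ?thesis
    unfolding Phi_def phi_def
    by (auto intro!: derivative_eq_intros)
      (simp add: divide_simps, simp add: algebra_simps power2_eq_square)
qed

lemma Phi_increment_ge:
  assumes "T > 0" "x \<le> y"
  shows "x - y \<le> Phi T y - Phi T x"
  using DERIV_ge_imp_increment_ge[OF \<open>x \<le> y\<close> has_real_derivative_Phi[OF \<open>T > 0\<close>]]
    phi_ge_minus_one by fastforce

text \<open>
  Sum-versus-integral comparison for the unimodal \<open>\<phi>\<close>: the correction term makes
  \<open>\<phi>(u) \<le> \<Psi>(u) - \<Psi>(u - 1)\<close> hold also on the step across the peak \<open>T/\<surd>2\<close>.
\<close>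
definition Psi :: "real \<Rightarrow> real \<Rightarrow> real" where
  "Psi T x = Phi T x + phi T (min x (T / sqrt 2))"

lemma phi_le_Psi_diff:
  assumes T: "T > 0" and u: "1 \<le> u"
  shows "phi T u \<le> Psi T u - Psi T (u - 1)"
proof -
  let ?c = "T / sqrt 2"
  have "min (phi T (u - 1)) (phi T u) * (u - (u - 1)) \<le> Phi T u - Phi T (u - 1)"
    using u
    by (intro DERIV_ge_imp_increment_ge[where f' = "phi T"] has_real_derivative_Phi[OF T]
        phi_ge_min_endpoints[OF T]) auto
  then have Phi_step: "min (phi T (u - 1)) (phi T u) \<le> Phi T u - Phi T (u - 1)"
    by simp
  have "?c > 0" using T by simp
  consider "u \<le> ?c" | "?c \<le> u - 1" | "u - 1 < ?c" "?c < u" by linarith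
  then show ?thesis
  proof cases
    case 1
    then have "phi T (u - 1) \<le> phi T u" using u by (intro phi_mono[OF T]) auto
    with 1 Phi_step show ?thesis unfolding Psi_def by simp
  next
    case 2
    then have "phi T u \<le> phi T (u - 1)" by (intro phi_antimono[OF T]) auto
    with 2 Phi_step show ?thesis unfolding Psi_def by simp
  next
    case 3
    then have "phi T (u - 1) \<le> phi T ?c" "phi T u \<le> phi T ?c"
      using u by (auto intro: phi_mono[OF T] phi_antimono[OF T])
    with 3 Phi_step show ?thesis unfolding Psi_def by (simp add: min_def split: if_splits)
  qed
qed

lemma sum_phi_le_Psi_diff:
  assumes "T > 0" "real m \<le> a"
  shows "(\<Sum>k\<in>{1..m}. phi T (1 + a - real k)) \<le> Psi T a - Psi T (a - real m)"
  using assms(2)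
proof (induction m)
  case (Suc m)
  have "phi T (a - real m) \<le> Psi T (a - real m) - Psi T (a - real m - 1)"
    using phi_le_Psi_diff[OF \<open>T > 0\<close>, of "a - real m"] Suc.prems by simp
  with Suc show ?case by (simp add: algebra_simps)
qed simp

lemma sum_phi_le_Phi:
  assumes T: "T > 0" and a: "0 \<le> a"
  shows "(\<Sum>k\<in>{1..nat \<lfloor>a\<rfloor>}. phi T (1 + a - real k)) \<le> Phi T a + 7/3"
proof -
  define f where "f = a - real (nat \<lfloor>a\<rfloor>)"
  have f: "0 \<le> f" "f < 1" unfolding f_def using a by linarith+
  have "- f \<le> Phi T f" using Phi_increment_ge[OF T \<open>0 \<le> f\<close>] by simp
  moreover have "(\<Sum>k\<in>{1..nat \<lfloor>a\<rfloor>}. phi T (1 + a - real k)) \<le> Psi T a - Psi T f"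
    unfolding f_def using a by (intro sum_phi_le_Psi_diff[OF T]) linarith
  ultimately show ?thesis
    unfolding Psi_def using f phi_ge_minus_one[of T "min f (T / sqrt 2)"]
      phi_le_one_third[of T "min a (T / sqrt 2)"]
    by linarith
qed

definition W_rescaled :: "real \<Rightarrow> real \<Rightarrow> real \<Rightarrow> real" where
  "W_rescaled T \<beta> s = - (1 / (2 * \<beta>)) * T^2 * W (s * \<beta> / (2 * T))"

lemma has_real_derivative_W_rescaled:
  assumes "T > 0" "\<beta> > 0"
  shows "(W_rescaled T \<beta> has_real_derivative Phi T (s * \<beta> / 2)) (at s)"
proof -
  have "T^2 + (s * \<beta>)^2 > 0" using assms by (simp add: add_pos_nonneg)
  moreover have "4 * (s * \<beta> / (2 * T))^2 + 1 = (T^2 + (s * \<beta>)^2) / T^2"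
    "1 + (2 * (s * \<beta> / (2 * T)))^2 = (T^2 + (s * \<beta>)^2) / T^2"
    "2 * (s * \<beta> / (2 * T)) = 2 * (s * \<beta> / 2) / T"
    "T^2 + 4 * (s * \<beta> / 2)^2 = T^2 + (s * \<beta>)^2"
    using assms by (simp_all add: field_simps power2_eq_square)
  ultimately show ?thesis
    using assms unfolding W_rescaled_def W_def Phi_def
    by (auto intro!: derivative_eq_intros)
      (simp add: divide_simps, simp add: algebra_simps power2_eq_square)
qed

lemma W_rescaled_zero [simp]: "W_rescaled T \<beta> 0 = 0"
  unfolding W_rescaled_def W_def by simp

lemma Phi_le_W_rescaled_diff:
  assumes T: "T > 0" and \<beta>: "\<beta> > 0"
  shows "Phi T (x * \<beta> / 2) - \<beta> / 2 \<le> W_rescaled T \<beta> (x + 1) - W_rescaled T \<beta> x"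
proof -
  have "Phi T (x * \<beta> / 2) - \<beta> / 2 \<le> Phi T (s * \<beta> / 2)" if "x \<le> s" "s \<le> x + 1" for s
  proof -
    have "x * \<beta> / 2 - s * \<beta> / 2 \<le> Phi T (s * \<beta> / 2) - Phi T (x * \<beta> / 2)"
      using that \<beta> by (intro Phi_increment_ge[OF T]) simp
    moreover have "(s - x) * \<beta> \<le> 1 * \<beta>" using that \<beta> by (intro mult_right_mono) auto
    ultimately show ?thesis by (simp add: algebra_simps)
  qed
  then have "(Phi T (x * \<beta> / 2) - \<beta> / 2) * (x + 1 - x)
      \<le> W_rescaled T \<beta> (x + 1) - W_rescaled T \<beta> x"
    by (intro DERIV_ge_imp_increment_ge[where f' = "\<lambda>s. Phi T (s * \<beta> / 2)"]
        has_real_derivative_W_rescaled[OF T \<beta>]) auto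
  then show ?thesis by simp
qed

lemma sum_Phi_le_W_rescaled:
  assumes "T > 0" "\<beta> > 0" "1 \<le> n"
  shows "(\<Sum>j\<in>{1..<n}. Phi T (real j * \<beta> / 2)) \<le> W_rescaled T \<beta> (real n) + real n * \<beta> / 2"
proof -
  let ?R = "\<lambda>j. W_rescaled T \<beta> (real j)"
  have "(\<Sum>j\<in>{1..<n}. Phi T (real j * \<beta> / 2) - \<beta> / 2) \<le> (\<Sum>j\<in>{1..<n}. ?R (Suc j) - ?R j)"
  proof (rule sum_mono)
    fix j
    show "Phi T (real j * \<beta> / 2) - \<beta> / 2 \<le> ?R (Suc j) - ?R j"
      using Phi_le_W_rescaled_diff[OF assms(1,2), of "real j"] by (simp add: add.commute)
  qed
  also have "\<dots> = ?R n - ?R 1"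
    using assms(3) by (rule sum_Suc_diff')
  finally have "(\<Sum>j\<in>{1..<n}. Phi T (real j * \<beta> / 2)) - (real n - 1) * (\<beta> / 2) \<le> ?R n - ?R 1"
    using assms(3) by (simp add: sum_subtractf)
  moreover have "- \<beta> / 2 \<le> ?R 1"
    using Phi_le_W_rescaled_diff[OF assms(1,2), of 0] by simp
  moreover have "(real n - 1) * (\<beta> / 2) = real n * \<beta> / 2 - \<beta> / 2"
    by (simp add: field_simps)
  ultimately show ?thesis by argo
qed

lemma c3_bound:
  assumes "\<beta> > 0" "1 \<le> N"
  shows "7/3 * (real N - 1) + real N * \<beta> / 2 \<le> 2 * c3 N \<beta> * real N"
proof -
  have c3_eq: "2 * c3 N \<beta> * real N = (\<beta> / 8 - 1) + 3/4 * (real N * \<beta>) + 3 * real N"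
    unfolding c3_def using assms(2) by (simp add: field_simps)
  have "0 \<le> real N * \<beta>" "1 \<le> real N" using assms by simp_all
  then show ?thesis unfolding c3_eq using assms(1) by argo
qed

lemma double_sum_phi_le:
  assumes "0 \<le> T" "\<beta> > 0" "1 \<le> N"
  shows "(\<Sum>j\<in>{1..<N}. \<Sum>k\<in>{1..nat \<lfloor>real j * \<beta> / 2\<rfloor>}. phi T (1 + real j * \<beta> / 2 - real k))
    \<le> W_rescaled T \<beta> (real N) + 2 * c3 N \<beta> * real N"
proof (cases "T = 0")
  case True
  have "0 \<le> 7/3 * (real N - 1) + real N * \<beta> / 2" using assms by simp
  then have "0 \<le> 2 * c3 N \<beta> * real N" using c3_bound[OF assms(2,3)] by linarith
  with True show ?thesis by (simp add: phi_def W_rescaled_def)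
next
  case False
  with assms have T: "T > 0" by simp
  have "(\<Sum>j\<in>{1..<N}. \<Sum>k\<in>{1..nat \<lfloor>real j * \<beta> / 2\<rfloor>}. phi T (1 + real j * \<beta> / 2 - real k))
      \<le> (\<Sum>j\<in>{1..<N}. Phi T (real j * \<beta> / 2) + 7/3)"
    using assms by (intro sum_mono sum_phi_le_Phi[OF T]) simp
  also have "\<dots> = (\<Sum>j\<in>{1..<N}. Phi T (real j * \<beta> / 2)) + 7/3 * (real N - 1)"
    using assms by (simp add: sum.distrib)
  also have "\<dots> \<le> W_rescaled T \<beta> (real N) + 2 * c3 N \<beta> * real N"
    using sum_Phi_le_W_rescaled[OF T assms(2,3)] c3_bound[OF assms(2,3)] by simp
  finally show ?thesis .
qed

theorem lemma3p5:
  fixes \<beta> t :: real and N :: nat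
  assumes "\<beta> > 0" and "N \<ge> 1"
    and "\<bar>t\<bar> \<ge> (real N - 1) * \<beta> / 2"
  shows "(cmod (P N \<beta> t))^2
    \<le> exp (- (1 / (2 * \<beta>)) * t^2 * W (real N * \<beta> / (2 * \<bar>t\<bar>))) * exp (2 * c3 N \<beta> * real N)"
proof -
  have phi_nonneg: "0 \<le> 1 + phi \<bar>t\<bar> u" for u using phi_ge_minus_one[of "\<bar>t\<bar>" u] by linarith
  have "(cmod (P N \<beta> t))^2
      = (\<Prod>j\<in>{1..<N}. \<Prod>k\<in>{1..nat \<lfloor>real j * \<beta> / 2\<rfloor>}. 1 + phi \<bar>t\<bar> (1 + real j * \<beta> / 2 - real k))"
    by (rule norm_P_squared)
  also have "\<dots> \<le> (\<Prod>j\<in>{1..<N}. \<Prod>k\<in>{1..nat \<lfloor>real j * \<beta> / 2\<rfloor>}.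
      exp (phi \<bar>t\<bar> (1 + real j * \<beta> / 2 - real k)))"
    by (intro prod_mono conjI prod_nonneg ballI exp_ge_add_one_self phi_nonneg)
  also have "\<dots> = exp (\<Sum>j\<in>{1..<N}. \<Sum>k\<in>{1..nat \<lfloor>real j * \<beta> / 2\<rfloor>}.
      phi \<bar>t\<bar> (1 + real j * \<beta> / 2 - real k))"
    by (simp add: exp_sum)
  also have "\<dots> \<le> exp (W_rescaled \<bar>t\<bar> \<beta> (real N) + 2 * c3 N \<beta> * real N)"
    using double_sum_phi_le[of "\<bar>t\<bar>"] assms(1,2) by simp
  also have "\<dots> = exp (- (1 / (2 * \<beta>)) * t^2 * W (real N * \<beta> / (2 * \<bar>t\<bar>))) * exp (2 * c3 N \<beta> * real N)"
    unfolding W_rescaled_def exp_add power2_abs ..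
  finally show ?thesis .
qed

end
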